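(* Let $\alpha,\beta,\gamma>-1$ be real numbers with $|\alpha-\gamma|<1$ and $\alpha+\beta\le -1$, and let $N\ge1$ be an integer. Let $\tilde H$ be the $N\times N$ matrix with entries \[ \tilde H_{jk}=\frac{\Gamma(j+k+\alpha+\beta+1)}{\Gamma(j+k+\gamma+\beta+2)},\qquad 1\le j,k\le N. \] Then $\tilde H$ is real, symmetric and positive semidefinite.
   Context: $\Gamma$ denotes the gamma function. $\tilde H$ is the trailing submatrix (rows and columns indexed from $1$) of the Hankel part of the conversion matrix from Jacobi $(\alpha,\beta)$ coefficients to Jacobi $(\gamma,\beta)$ coefficients. *)

theory Defs
  imports "HOL-Analysis.Analysis"
begin

definition Htilde :: "real \<Rightarrow> real \<Rightarrow> real \<Rightarrow> nat \<Rightarrow> nat \<Rightarrow> real" where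
  "Htilde \<alpha> \<beta> \<gamma> j k =
     Gamma (real (j + k) + \<alpha> + \<beta> + 1) / Gamma (real (j + k) + \<gamma> + \<beta> + 2)"

definition symmetric_mat :: "nat \<Rightarrow> (nat \<Rightarrow> nat \<Rightarrow> real) \<Rightarrow> bool" where
  "symmetric_mat N A \<longleftrightarrow> (\<forall>j\<in>{1..N}. \<forall>k\<in>{1..N}. A j k = A k j)"

definition psd_mat :: "nat \<Rightarrow> (nat \<Rightarrow> nat \<Rightarrow> real) \<Rightarrow> bool" where
  "psd_mat N A \<longleftrightarrow> (\<forall>x :: nat \<Rightarrow> real.
      (\<Sum>j=1..N. \<Sum>k=1..N. x j * A j k * x k) \<ge> 0)"

end

theory Submission
  imports Defs
begin

text \<open>With \<open>s = j + k\<close> and \<open>d = \<gamma> - \<alpha> + 1 > 0\<close>, the entry \<open>\<Gamma>(s+\<alpha>+\<beta>+1)/\<Gamma>(s+\<gamma>+\<beta>+2)\<close> equals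
  \<open>B(s+\<alpha>+\<beta>+1, d)/\<Gamma>(d)\<close>, i.e. the moment \<open>\<integral>\<^sub>0\<^sup>1 t\<^sup>s w(t) dt\<close> of the positive weight
  \<open>w(t) = t\<^bsup>\<alpha>+\<beta>\<^esup>(1-t)\<^bsup>d-1\<^esup>/\<Gamma>(d)\<close>. Hence \<open>\<tilde>H\<close> is a Hankel moment matrix and its quadratic form
  is \<open>\<integral>\<^sub>0\<^sup>1 (\<Sum>\<^sub>j x\<^sub>j t\<^sup>j)\<^sup>2 w(t) dt \<ge> 0\<close>. Integrability only needs \<open>s+\<alpha>+\<beta>+1 > 0\<close> for
  \<open>s \<ge> 2\<close>, which already follows from \<open>\<alpha>, \<beta> > -1\<close>.\<close>

lemma Htilde_eq_Beta:
  fixes \<alpha> \<beta> \<gamma> :: real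
  assumes "\<gamma> - \<alpha> + 1 > 0"
  shows "Htilde \<alpha> \<beta> \<gamma> j k =
           Beta (real (j + k) + (\<alpha> + \<beta> + 1)) (\<gamma> - \<alpha> + 1) / Gamma (\<gamma> - \<alpha> + 1)"
proof -
  have "Gamma (\<gamma> - \<alpha> + 1) > 0"
    using assms by (rule Gamma_real_pos)
  moreover have "real (j + k) + (\<alpha> + \<beta> + 1) + (\<gamma> - \<alpha> + 1) = real (j + k) + \<gamma> + \<beta> + 2"
    by simp
  ultimately show ?thesis
    unfolding Htilde_def Beta_def by (simp add: field_simps add.assoc)
qed

lemma symmetric_mat_Htilde: "symmetric_mat N (Htilde \<alpha> \<beta> \<gamma>)"
  unfolding symmetric_mat_def Htilde_def by (simp add: add.commute)

lemma psd_mat_scale: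
  assumes "psd_mat N A" and "c \<ge> 0"
  shows "psd_mat N (\<lambda>j k. c * A j k)"
  unfolding psd_mat_def
proof
  fix x :: "nat \<Rightarrow> real"
  have "(\<Sum>j=1..N. \<Sum>k=1..N. x j * (c * A j k) * x k) = c * (\<Sum>j=1..N. \<Sum>k=1..N. x j * A j k * x k)"
    by (simp add: sum_distrib_left mult_ac)
  also have "\<dots> \<ge> 0"
    using assms unfolding psd_mat_def by simp
  finally show "(\<Sum>j=1..N. \<Sum>k=1..N. x j * (c * A j k) * x k) \<ge> 0" .
qed

lemma hankel_form_eq_square:
  fixes t :: real and x :: "nat \<Rightarrow> real"
  assumes "t > 0"
  shows "(\<Sum>j=1..N. \<Sum>k=1..N. x j * x k * (t powr (real (j + k) + a - 1) * w))
           = t powr (a - 1) * w * (\<Sum>j=1..N. x j * t ^ j)\<^sup>2"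
proof -
  have pw: "t powr (real (j + k) + a - 1) = t ^ j * t ^ k * t powr (a - 1)" for j k
    using assms by (simp add: powr_add[symmetric] powr_realpow[symmetric] algebra_simps)
  show ?thesis
    unfolding pw power2_eq_square sum_product sum_distrib_left
    by (intro sum.cong refl) (simp add: sum_distrib_left mult_ac)
qed

lemma psd_mat_Beta_hankel:
  fixes a d :: real
  assumes a: "a > -2" and d: "d > 0"
  shows "psd_mat N (\<lambda>j k. Beta (real (j + k) + a) d)"
  unfolding psd_mat_def
proof
  fix x :: "nat \<Rightarrow> real"
  let ?w = "\<lambda>t::real. (1 - t) powr (d - 1)"
  have entry: "((\<lambda>t. x j * x k * (t powr (real (j + k) + a - 1) * ?w t))
                 has_integral (x j * Beta (real (j + k) + a) d * x k)) {0<..<1}"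
    if "j \<in> {1..N}" "k \<in> {1..N}" for j k
  proof -
    have "real (j + k) + a > 0"
      using that a by auto
    from has_integral_Beta_real[OF this d]
    have "((\<lambda>t. t powr (real (j + k) + a - 1) * ?w t) has_integral Beta (real (j + k) + a) d) {0<..<1}"
      by (simp add: has_integral_Icc_iff_Ioo)
    from has_integral_mult_right[OF this, of "x j * x k"] show ?thesis
      by (simp add: mult_ac)
  qed
  have form: "((\<lambda>t. \<Sum>j=1..N. \<Sum>k=1..N. x j * x k * (t powr (real (j + k) + a - 1) * ?w t))
                has_integral (\<Sum>j=1..N. \<Sum>k=1..N. x j * Beta (real (j + k) + a) d * x k)) {0<..<1}"
    by (intro has_integral_sum entry) auto
  show "(\<Sum>j=1..N. \<Sum>k=1..N. x j * Beta (real (j + k) + a) d * x k) \<ge> 0"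
  proof (rule has_integral_nonneg[OF form])
    fix t :: real
    assume t: "t \<in> {0<..<1}"
    then show "0 \<le> (\<Sum>j=1..N. \<Sum>k=1..N. x j * x k * (t powr (real (j + k) + a - 1) * ?w t))"
      by (subst hankel_form_eq_square) auto
  qed
qed

theorem mainTheorem10:
  fixes \<alpha> \<beta> \<gamma> :: real and N :: nat
  assumes "\<alpha> > -1" and "\<beta> > -1" and "\<gamma> > -1"
    and "\<bar>\<alpha> - \<gamma>\<bar> < 1" and "\<alpha> + \<beta> \<le> -1"
    and "N \<ge> 1"
  shows "symmetric_mat N (Htilde \<alpha> \<beta> \<gamma>) \<and> psd_mat N (Htilde \<alpha> \<beta> \<gamma>)"
proof
  show "symmetric_mat N (Htilde \<alpha> \<beta> \<gamma>)"
    by (rule symmetric_mat_Htilde)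
  have d: "\<gamma> - \<alpha> + 1 > 0"
    using assms(4) by linarith
  have "psd_mat N (\<lambda>j k. Beta (real (j + k) + (\<alpha> + \<beta> + 1)) (\<gamma> - \<alpha> + 1))"
    using assms(1,2) d by (intro psd_mat_Beta_hankel) auto
  then have "psd_mat N (\<lambda>j k. inverse (Gamma (\<gamma> - \<alpha> + 1)) *
                              Beta (real (j + k) + (\<alpha> + \<beta> + 1)) (\<gamma> - \<alpha> + 1))"
    using Gamma_real_pos[OF d] by (intro psd_mat_scale) auto
  then show "psd_mat N (Htilde \<alpha> \<beta> \<gamma>)"
    by (simp add: Htilde_eq_Beta[OF d, abs_def] field_simps)
qed

end
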